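(* Let $\varepsilon>0$ and let $H\ge\max_p r_p$ be an integer. Then the assignment $\big(\tfrac12\alpha_p\big)_{p\in\Pi}$, $\big(\tfrac12\beta_{t,\tau}\big)_{t\in T,1\le\tau\le H}$, $\big(\tfrac12\beta_{r,\tau}\big)_{r\in R,1\le\tau\le H}$ is a feasible solution of the dual program $\mathcal D_{\varepsilon,H}$, and consequently $\mathcal D_\varepsilon\le 2\,\mathrm{val}(\mathcal P_{\varepsilon,H})$.
   Context: Network. $S,T,R,D$ are pairwise disjoint finite sets (sources, transmitters, receivers, destinations). Each transmitter $t\in T$ is attached to a source $s(t)\in S$ via a link of integer delay $d(s(t),t)\ge 0$; each receiver $r\in R$ is attached to a destination $d(r)\in D$ via a link of integer delay $d(r,d(r))\ge 0$. A set $E_R\subseteq T\times R$ of reconfigurable edges is given, each $e\in E_R$ with integer delay $d(e)\ge 1$. A set $E_\ell\subseteq S\times D$ of fixed links is given, each with integer delay $\ge0$. For $e=(t,r)\in E_R$ put $\Delta(e)=d(s(t),t)+d(e)+d(r,d(r))$. Two edges of $E_R$ are adjacent if they share a transmitter or a receiver (an edge is adjacent to itself). Packets. $\Pi$ is a finite set of unit-size packets; packet $p$ has weight $w_p>0$, release time $r_p\in\mathbb Z_{\ge1}$, source $s_p$, destination $d_p$. Let $E(p)=\{(t,r)\in E_R: s(t)=s_p,\ d(r)=d_p\}$; assume $E(p)\neq\emptyset$ for all $p$. $\Pi_\ell$ is the set of packets with $(s_p,d_p)\in E_\ell$, and $\ell_p:=d(s_p,d_p)$ for them. Fix a total order $\prec$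 on $\Pi$ with $r_p<r_q\Rightarrow p\prec q$. Algorithm ALG. Packets are processed in the order $\prec$; $p$ is processed at time $r_p$, before transmission step $r_p$. A packet assigned to a reconfigurable edge $e$ is split into $d(e)$ chunks of weight $w_p/d(e)$ assigned to $e$; $p(c)$, $w_c$, $e(c)$ denote the packet, weight and edge of chunk $c$. A chunk is pending until transmitted; $W(C)$ is the total weight of a set $C$ of chunks. When $p$ is processed, $B(p)$ is the set of pending chunks of packets $p'\prec p$; for $e=(t,r)\in E(p)$, $\mathrm{Adj}(p,e)$ = chunks of $B(p)$ whose edge is adjacent to $e$, $H(p,e)=\{c\in\mathrm{Adj}(p,e):w_c\ge w_p/d(e)\}$, $L(p,e)=\mathrm{Adj}(p,e)\setminus H(p,e)$, and $\mathrm{imp}(p,e)=w_p(d(s_p,t)+\frac{d(e)+1}{2}+d(r,d_p))+w_p|H(p,e)|+d(e)W(L(p,e))$. With $e^*\in\arg\min_{e\in E(p)}\mathrm{imp}(p,e)$: if $p\in\Pi_\ell$ and $w_p\ell_p\le\mathrm{imp}(p,e^* )$, $p$ is sent over its fixed link; otherwise $p$ is assigned to $e(p):=e^*$ and split into chunks. Scheduler: at each integer $\tau\ge1$, build $M_\tau$ greedily over pending chunks in order of decreasing weight (ties by $\prec$ on packets, then arbitrary), adding $c$ iff no chunk already in $M_\tau$ has an edge adjacent to $e(c)$; chunks of $M_\tau$ are transmitted at step $\tau$. If chunk $c$ of $p$ is transmitted at step $\tau_c$ via $e(p)=(t,r)$, its completion time is $f_c=\tau_c+1+d(s_p,t)+d(r,d_p)$,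 and $c$ is active at integer times $\tau$ with $r_p\le\tau<f_c$. Dual assignment: $\alpha_p=w_p\ell_p$ if $p$ is sent over its fixed link, and $\alpha_p=\mathrm{imp}(p,e(p))$ (computed when $p$ is processed) otherwise; $\beta_{t,\tau}$ ($t\in T$, integer $\tau\ge1$) is the total weight of chunks active at $\tau$ whose edge has transmitter $t$, and $\beta_{r,\tau}$ ($r\in R$) likewise with receiver $r$. For $\varepsilon>0$, $\mathcal D_\varepsilon=\sum_p\alpha_p-\frac{1}{2+\varepsilon}\big(\sum_{t}\sum_{\tau\ge1}\beta_{t,\tau}+\sum_r\sum_{\tau\ge1}\beta_{r,\tau}\big)$. Linear programs. For $\varepsilon>0$ and integer $H\ge\max_p r_p$, the primal $\mathcal P_{\varepsilon,H}$ has variables $x_{p,e,\tau}\ge0$ ($p\in\Pi$, $e\in E(p)$, $\tau\in\{r_p,\dots,H\}$) and $y_p\ge0$ ($p\in\Pi_\ell$): minimize $\sum_{p}\sum_{e\in E(p)}\sum_{\tau}w_px_{p,e,\tau}(\tau+\Delta(e)-r_p)+\sum_{p\in\Pi_\ell}w_p\ell_py_p$ subject to $\sum_{e,\tau}x_{p,e,\tau}+y_p\ge1$ ($p\in\Pi_\ell$); $\sum_{e,\tau}x_{p,e,\tau}\ge1$ ($p\notin\Pi_\ell$); for every $\tau\le H$, $t\in T$: $\sum_r\sum_{p:r_p\le\tau,(t,r)\in E(p)}d(t,r)x_{p,(t,r),\tau}\le\frac1{2+\varepsilon}$; for every $\tau\le H$, $r\in R$: $\sum_t\sum_{p:r_p\le\tau,(t,r)\in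 E(p)}d(t,r)x_{p,(t,r),\tau}\le\frac1{2+\varepsilon}$. $\mathrm{val}(\mathcal P_{\varepsilon,H})$ is its optimal value ($+\infty$ if infeasible). Its dual $\mathcal D_{\varepsilon,H}$ has variables $\alpha_p\ge0$ ($p\in\Pi$), $\beta_{t,\tau}\ge0$, $\beta_{r,\tau}\ge0$ ($t\in T$, $r\in R$, $1\le\tau\le H$): maximize $\sum_p\alpha_p-\frac1{2+\varepsilon}\big(\sum_t\sum_{\tau\le H}\beta_{t,\tau}+\sum_r\sum_{\tau\le H}\beta_{r,\tau}\big)$ subject to $\alpha_p-d(e)(\beta_{t,\tau}+\beta_{r,\tau})\le w_p(\tau+\Delta(e)-r_p)$ for all $p\in\Pi$, $e=(t,r)\in E(p)$, $r_p\le\tau\le H$, and $\alpha_p\le w_p\ell_p$ for all $p\in\Pi_\ell$. *)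

theory Defs
  imports "HOL-Analysis.Analysis"
begin

record ('v, 'p) inst =
  Src :: "'v set"
  Trn :: "'v set"
  Rcv :: "'v set"
  Dst :: "'v set"
  sof :: "'v \<Rightarrow> 'v"
  dof :: "'v \<Rightarrow> 'v"
  ER  :: "('v \<times> 'v) set"   (* reconfigurable edges, subset of T x R *)
  EL  :: "('v \<times> 'v) set"   (* fixed links, subset of S x D *)
  dl  :: "'v \<Rightarrow> 'v \<Rightarrow> nat"  (* delay d(u,v) of every link (s(t),t), (t,r), (r,d(r)), (s,d) *)
  Pk  :: "'p set"
  wt  :: "'p \<Rightarrow> real"
  rl  :: "'p \<Rightarrow> nat"
  sp  :: "'p \<Rightarrow> 'v"
  dp  :: "'p \<Rightarrow> 'v"
  prec :: "'p \<Rightarrow> 'p \<Rightarrow> bool"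

definition dE :: "('v,'p) inst \<Rightarrow> 'v \<times> 'v \<Rightarrow> nat" where
  "dE I e = dl I (fst e) (snd e)"

definition Delta :: "('v,'p) inst \<Rightarrow> 'v \<times> 'v \<Rightarrow> nat" where
  "Delta I e = dl I (sof I (fst e)) (fst e) + dl I (fst e) (snd e) + dl I (snd e) (dof I (snd e))"

definition Ep :: "('v,'p) inst \<Rightarrow> 'p \<Rightarrow> ('v \<times> 'v) set" where
  "Ep I p = {e \<in> ER I. sof I (fst e) = sp I p \<and> dof I (snd e) = dp I p}"

definition PiL :: "('v,'p) inst \<Rightarrow> 'p set" where
  "PiL I = {p \<in> Pk I. (sp I p, dp I p) \<in> EL I}"

definition ell :: "('v,'p) inst \<Rightarrow> 'p \<Rightarrow> nat" where
  "ell I p = dl I (sp I p) (dp I p)"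

definition adjacent :: "'v \<times> 'v \<Rightarrow> 'v \<times> 'v \<Rightarrow> bool" where
  "adjacent e e' \<longleftrightarrow> fst e = fst e' \<or> snd e = snd e'"

definition valid_inst :: "('v,'p) inst \<Rightarrow> bool" where
  "valid_inst I \<longleftrightarrow>
     finite (Src I) \<and> finite (Trn I) \<and> finite (Rcv I) \<and> finite (Dst I) \<and>
     Src I \<inter> Trn I = {} \<and> Src I \<inter> Rcv I = {} \<and> Src I \<inter> Dst I = {} \<and>
     Trn I \<inter> Rcv I = {} \<and> Trn I \<inter> Dst I = {} \<and> Rcv I \<inter> Dst I = {} \<and>
     (\<forall>t\<in>Trn I. sof I t \<in> Src I) \<and> (\<forall>r\<in>Rcv I. dof I r \<in> Dst I) \<and>
     ER I \<subseteq> Trn I \<times> Rcv I \<and> (\<forall>e\<in>ER I. dE I e \<ge> 1) \<and>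
     EL I \<subseteq> Src I \<times> Dst I \<and>
     finite (Pk I) \<and>
     (\<forall>p\<in>Pk I. wt I p > 0 \<and> rl I p \<ge> 1 \<and> sp I p \<in> Src I \<and> dp I p \<in> Dst I \<and> Ep I p \<noteq> {}) \<and>
     (\<forall>p\<in>Pk I. \<not> prec I p p) \<and>
     (\<forall>p\<in>Pk I. \<forall>q\<in>Pk I. \<forall>u\<in>Pk I. prec I p q \<longrightarrow> prec I q u \<longrightarrow> prec I p u) \<and>
     (\<forall>p\<in>Pk I. \<forall>q\<in>Pk I. p \<noteq> q \<longrightarrow> prec I p q \<or> prec I q p) \<and>
     (\<forall>p\<in>Pk I. \<forall>q\<in>Pk I. rl I p < rl I q \<longrightarrow> prec I p q)"

(* fixd p: p is sent over its fixed link; edg p: the minimiser e* computed for p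
   (equal to e(p) when p is not sent over its fixed link); chunks of p are (p,i), i < d(e(p));
   tx c: the transmission step of chunk c. *)
record ('v, 'p) run =
  fixd :: "'p \<Rightarrow> bool"
  edg  :: "'p \<Rightarrow> 'v \<times> 'v"
  tx   :: "'p \<times> nat \<Rightarrow> nat"

definition chunks :: "('v,'p) inst \<Rightarrow> ('v,'p) run \<Rightarrow> ('p \<times> nat) set" where
  "chunks I A = {c. fst c \<in> Pk I \<and> \<not> fixd A (fst c) \<and> snd c < dE I (edg A (fst c))}"

definition cw :: "('v,'p) inst \<Rightarrow> ('v,'p) run \<Rightarrow> 'p \<times> nat \<Rightarrow> real" where
  "cw I A c = wt I (fst c) / real (dE I (edg A (fst c)))"

definition cedge :: "('v,'p) run \<Rightarrow> 'p \<times> nat \<Rightarrow> 'v \<times> 'v" where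
  "cedge A c = edg A (fst c)"

(* B(p): chunks of packets p' \<prec> p still pending at time r_p (before step r_p) *)
definition Bset :: "('v,'p) inst \<Rightarrow> ('v,'p) run \<Rightarrow> 'p \<Rightarrow> ('p \<times> nat) set" where
  "Bset I A p = {c \<in> chunks I A. prec I (fst c) p \<and> tx A c \<ge> rl I p}"

definition AdjS :: "('v,'p) inst \<Rightarrow> ('v,'p) run \<Rightarrow> 'p \<Rightarrow> 'v \<times> 'v \<Rightarrow> ('p \<times> nat) set" where
  "AdjS I A p e = {c \<in> Bset I A p. adjacent (cedge A c) e}"

definition HS :: "('v,'p) inst \<Rightarrow> ('v,'p) run \<Rightarrow> 'p \<Rightarrow> 'v \<times> 'v \<Rightarrow> ('p \<times> nat) set" where
  "HS I A p e = {c \<in> AdjS I A p e. cw I A c \<ge> wt I p / real (dE I e)}"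

definition LS :: "('v,'p) inst \<Rightarrow> ('v,'p) run \<Rightarrow> 'p \<Rightarrow> 'v \<times> 'v \<Rightarrow> ('p \<times> nat) set" where
  "LS I A p e = AdjS I A p e - HS I A p e"

definition imp :: "('v,'p) inst \<Rightarrow> ('v,'p) run \<Rightarrow> 'p \<Rightarrow> 'v \<times> 'v \<Rightarrow> real" where
  "imp I A p e =
     wt I p * (real (dl I (sp I p) (fst e)) + (real (dE I e) + 1) / 2 + real (dl I (snd e) (dp I p)))
     + wt I p * real (card (HS I A p e))
     + real (dE I e) * (\<Sum>c\<in>LS I A p e. cw I A c)"

definition pending :: "('v,'p) inst \<Rightarrow> ('v,'p) run \<Rightarrow> nat \<Rightarrow> ('p \<times> nat) set" where
  "pending I A \<tau> = {c \<in> chunks I A. rl I (fst c) \<le> \<tau> \<and> \<tau> \<le> tx A c}"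

fun greedy_aux :: "('c \<Rightarrow> 'c \<Rightarrow> bool) \<Rightarrow> 'c set \<Rightarrow> 'c list \<Rightarrow> 'c set" where
  "greedy_aux adj M [] = M"
| "greedy_aux adj M (c # cs) =
     greedy_aux adj (if (\<forall>c'\<in>M. \<not> adj c' c) then insert c M else M) cs"

definition scan_before :: "('v,'p) inst \<Rightarrow> ('v,'p) run \<Rightarrow> 'p \<times> nat \<Rightarrow> 'p \<times> nat \<Rightarrow> bool" where
  "scan_before I A c c' \<longleftrightarrow>
     cw I A c > cw I A c' \<or>
     (cw I A c = cw I A c' \<and> (prec I (fst c) (fst c') \<or> fst c = fst c'))"

definition alg_run :: "('v,'p) inst \<Rightarrow> ('v,'p) run \<Rightarrow> bool" where
  "alg_run I A \<longleftrightarrow>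
     (\<forall>p\<in>Pk I.
        edg A p \<in> Ep I p \<and> (\<forall>e\<in>Ep I p. imp I A p (edg A p) \<le> imp I A p e) \<and>
        (fixd A p \<longleftrightarrow> p \<in> PiL I \<and> wt I p * real (ell I p) \<le> imp I A p (edg A p))) \<and>
     (\<forall>c\<in>chunks I A. rl I (fst c) \<le> tx A c) \<and>
     (\<forall>\<tau>\<ge>1. \<exists>L. distinct L \<and> set L = pending I A \<tau> \<and> sorted_wrt (scan_before I A) L \<and>
        {c \<in> pending I A \<tau>. tx A c = \<tau>} =
          greedy_aux (\<lambda>c' c. adjacent (cedge A c') (cedge A c)) {} L)"

definition fin_time :: "('v,'p) inst \<Rightarrow> ('v,'p) run \<Rightarrow> 'p \<times> nat \<Rightarrow> nat" where
  "fin_time I A c = tx A c + 1 + dl I (sp I (fst c)) (fst (cedge A c)) + dl I (snd (cedge A c)) (dp I (fst c))"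

definition active :: "('v,'p) inst \<Rightarrow> ('v,'p) run \<Rightarrow> 'p \<times> nat \<Rightarrow> nat \<Rightarrow> bool" where
  "active I A c \<tau> \<longleftrightarrow> rl I (fst c) \<le> \<tau> \<and> \<tau> < fin_time I A c"

definition alpha :: "('v,'p) inst \<Rightarrow> ('v,'p) run \<Rightarrow> 'p \<Rightarrow> real" where
  "alpha I A p = (if fixd A p then wt I p * real (ell I p) else imp I A p (edg A p))"

definition betaT :: "('v,'p) inst \<Rightarrow> ('v,'p) run \<Rightarrow> 'v \<Rightarrow> nat \<Rightarrow> real" where
  "betaT I A t \<tau> = (\<Sum>c\<in>{c \<in> chunks I A. active I A c \<tau> \<and> fst (cedge A c) = t}. cw I A c)"

definition betaR :: "('v,'p) inst \<Rightarrow> ('v,'p) run \<Rightarrow> 'v \<Rightarrow> nat \<Rightarrow> real" where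
  "betaR I A r \<tau> = (\<Sum>c\<in>{c \<in> chunks I A. active I A c \<tau> \<and> snd (cedge A c) = r}. cw I A c)"

definition Deps :: "('v,'p) inst \<Rightarrow> ('v,'p) run \<Rightarrow> real \<Rightarrow> real" where
  "Deps I A \<epsilon> = (\<Sum>p\<in>Pk I. alpha I A p)
     - 1 / (2 + \<epsilon>) * ((\<Sum>t\<in>Trn I. \<Sum>\<^sub>\<infinity>\<tau>\<in>{1..}. betaT I A t \<tau>) + (\<Sum>r\<in>Rcv I. \<Sum>\<^sub>\<infinity>\<tau>\<in>{1..}. betaR I A r \<tau>))"

definition primal_feasible :: "('v,'p) inst \<Rightarrow> real \<Rightarrow> nat \<Rightarrow>
    ('p \<Rightarrow> 'v \<times> 'v \<Rightarrow> nat \<Rightarrow> real) \<Rightarrow> ('p \<Rightarrow> real) \<Rightarrow> bool" where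
  "primal_feasible I \<epsilon> H x y \<longleftrightarrow>
     (\<forall>p\<in>Pk I. \<forall>e\<in>Ep I p. \<forall>\<tau>\<in>{rl I p..H}. x p e \<tau> \<ge> 0) \<and>
     (\<forall>p\<in>PiL I. y p \<ge> 0) \<and>
     (\<forall>p\<in>PiL I. (\<Sum>e\<in>Ep I p. \<Sum>\<tau>\<in>{rl I p..H}. x p e \<tau>) + y p \<ge> 1) \<and>
     (\<forall>p\<in>Pk I - PiL I. (\<Sum>e\<in>Ep I p. \<Sum>\<tau>\<in>{rl I p..H}. x p e \<tau>) \<ge> 1) \<and>
     (\<forall>\<tau>\<le>H. \<forall>t\<in>Trn I.
        (\<Sum>r\<in>Rcv I. \<Sum>p\<in>{p \<in> Pk I. rl I p \<le> \<tau> \<and> (t, r) \<in> Ep I p}. real (dl I t r) * x p (t, r) \<tau>)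
          \<le> 1 / (2 + \<epsilon>)) \<and>
     (\<forall>\<tau>\<le>H. \<forall>r\<in>Rcv I.
        (\<Sum>t\<in>Trn I. \<Sum>p\<in>{p \<in> Pk I. rl I p \<le> \<tau> \<and> (t, r) \<in> Ep I p}. real (dl I t r) * x p (t, r) \<tau>)
          \<le> 1 / (2 + \<epsilon>))"

definition primal_obj :: "('v,'p) inst \<Rightarrow> nat \<Rightarrow>
    ('p \<Rightarrow> 'v \<times> 'v \<Rightarrow> nat \<Rightarrow> real) \<Rightarrow> ('p \<Rightarrow> real) \<Rightarrow> real" where
  "primal_obj I H x y =
     (\<Sum>p\<in>Pk I. \<Sum>e\<in>Ep I p. \<Sum>\<tau>\<in>{rl I p..H}.
        wt I p * x p e \<tau> * (real \<tau> + real (Delta I e) - real (rl I p)))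
     + (\<Sum>p\<in>PiL I. wt I p * real (ell I p) * y p)"

(* optimal value; Inf of the empty set is +\<infinity> (infeasible) *)
definition primal_val :: "('v,'p) inst \<Rightarrow> real \<Rightarrow> nat \<Rightarrow> ereal" where
  "primal_val I \<epsilon> H = Inf {ereal (primal_obj I H x y) | x y. primal_feasible I \<epsilon> H x y}"

definition dual_feasible :: "('v,'p) inst \<Rightarrow> nat \<Rightarrow>
    ('p \<Rightarrow> real) \<Rightarrow> ('v \<Rightarrow> nat \<Rightarrow> real) \<Rightarrow> ('v \<Rightarrow> nat \<Rightarrow> real) \<Rightarrow> bool" where
  "dual_feasible I H a bt br \<longleftrightarrow>
     (\<forall>p\<in>Pk I. a p \<ge> 0) \<and>
     (\<forall>t\<in>Trn I. \<forall>\<tau>\<in>{1..H}. bt t \<tau> \<ge> 0) \<and>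
     (\<forall>r\<in>Rcv I. \<forall>\<tau>\<in>{1..H}. br r \<tau> \<ge> 0) \<and>
     (\<forall>p\<in>Pk I. \<forall>e\<in>Ep I p. \<forall>\<tau>\<in>{rl I p..H}.
        a p - real (dE I e) * (bt (fst e) \<tau> + br (snd e) \<tau>)
          \<le> wt I p * (real \<tau> + real (Delta I e) - real (rl I p))) \<and>
     (\<forall>p\<in>PiL I. a p \<le> wt I p * real (ell I p))"

end

theory Submission
  imports Defs
begin

(*
  Halving is what makes the assignment feasible.  The fixed-link constraints hold because ALG
  keeps a packet on its fixed link exactly when that is at most as expensive as its best
  reconfigurable edge.  For a reconfigurable edge e = (t, r) of p and a time \<tau> \<ge> r_p,
  ALG's choice gives \<alpha>_p \<le> imp(p, e).  The head term of imp(p, e) is at most w_p \<Delta>(e), since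
  (d(e) + 1) / 2 \<le> d(e).  The queue term w_p |H(p, e)| + d(e) W(L(p, e)) is a sum over the
  chunks pending at r_p on edges adjacent to e, each contributing at most min(w_p, d(e) w_c).
  Chunks still active at \<tau> contribute at most d(e) (\<beta>_{t,\<tau>} + \<beta>_{r,\<tau>}); the others were
  transmitted at steps in [r_p, \<tau>), and as the greedy schedule uses t and r at most once per
  step there are at most 2 (\<tau> - r_p) of them.  Hence
  \<alpha>_p \<le> 2 w_p (\<tau> + \<Delta>(e) - r_p) + d(e) (\<beta>_{t,\<tau>} + \<beta>_{r,\<tau>}).
  Weak LP duality then gives the bound on the dual objective, which can only grow when the
  \<beta>-sums are truncated at H.
*)

lemma finite_Pk: "valid_inst I \<Longrightarrow> finite (Pk I)"
  unfolding valid_inst_def by blast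

lemma wt_pos: "valid_inst I \<Longrightarrow> p \<in> Pk I \<Longrightarrow> wt I p > 0"
  unfolding valid_inst_def by blast

lemma rl_pos: "valid_inst I \<Longrightarrow> p \<in> Pk I \<Longrightarrow> rl I p \<ge> 1"
  unfolding valid_inst_def by blast

lemma dE_ge_1: "valid_inst I \<Longrightarrow> e \<in> Ep I p \<Longrightarrow> dE I e \<ge> 1"
  unfolding valid_inst_def Ep_def by blast

lemma Ep_subset_Trn_Rcv: "valid_inst I \<Longrightarrow> Ep I p \<subseteq> Trn I \<times> Rcv I"
  unfolding valid_inst_def Ep_def by blast

section \<open>Weak duality\<close>

lemma sum_packet_edge_time_reorder:
  fixes F :: "'p \<Rightarrow> 'v \<Rightarrow> 'v \<Rightarrow> nat \<Rightarrow> 'a::comm_monoid_add"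
  assumes "finite P" "finite T" "finite R"
    and "\<And>p. p \<in> P \<Longrightarrow> E p \<subseteq> T \<times> R"
    and "\<And>p. p \<in> P \<Longrightarrow> rr p \<ge> 1"
  shows "(\<Sum>p\<in>P. \<Sum>e\<in>E p. \<Sum>\<tau>\<in>{rr p..H}. F p (fst e) (snd e) \<tau>)
       = (\<Sum>\<tau>\<in>{1..H}. \<Sum>t\<in>T. \<Sum>r\<in>R. \<Sum>p\<in>{p\<in>P. rr p \<le> \<tau> \<and> (t, r) \<in> E p}. F p t r \<tau>)"
proof -
  define G where "G p t r \<tau> = (if rr p \<le> \<tau> \<and> (t, r) \<in> E p then F p t r \<tau> else 0)" for p t r \<tau>
  have "(\<Sum>e\<in>E p. \<Sum>\<tau>\<in>{rr p..H}. F p (fst e) (snd e) \<tau>) = (\<Sum>t\<in>T. \<Sum>r\<in>R. \<Sum>\<tau>\<in>{1..H}. G p t r \<tau>)"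
    if "p \<in> P" for p
  proof -
    have "(\<Sum>\<tau>\<in>{rr p..H}. F p (fst e) (snd e) \<tau>) = (\<Sum>\<tau>\<in>{1..H}. G p (fst e) (snd e) \<tau>)"
      if "e \<in> E p" for e
    proof -
      have "{rr p..H} = {\<tau>\<in>{1..H}. rr p \<le> \<tau>}"
        using assms(5)[OF \<open>p \<in> P\<close>] by auto
      then show ?thesis
        using that unfolding G_def by (simp only: sum.inter_filter[OF finite_atLeastAtMost]) simp
    qed
    then have "(\<Sum>e\<in>E p. \<Sum>\<tau>\<in>{rr p..H}. F p (fst e) (snd e) \<tau>)
        = (\<Sum>e\<in>E p. \<Sum>\<tau>\<in>{1..H}. G p (fst e) (snd e) \<tau>)"
      by (rule sum.cong[OF refl])
    also have "\<dots> = (\<Sum>e\<in>T \<times> R. \<Sum>\<tau>\<in>{1..H}. G p (fst e) (snd e) \<tau>)"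
      using assms(2,3,4) that by (intro sum.mono_neutral_left) (auto simp: G_def)
    also have "\<dots> = (\<Sum>t\<in>T. \<Sum>r\<in>R. \<Sum>\<tau>\<in>{1..H}. G p t r \<tau>)"
      by (subst sum.cartesian_product) (simp add: case_prod_beta)
    finally show ?thesis .
  qed
  then have "(\<Sum>p\<in>P. \<Sum>e\<in>E p. \<Sum>\<tau>\<in>{rr p..H}. F p (fst e) (snd e) \<tau>)
      = (\<Sum>p\<in>P. \<Sum>t\<in>T. \<Sum>r\<in>R. \<Sum>\<tau>\<in>{1..H}. G p t r \<tau>)"
    by (rule sum.cong[OF refl])
  also have "\<dots> = (\<Sum>\<tau>\<in>{1..H}. \<Sum>t\<in>T. \<Sum>r\<in>R. \<Sum>p\<in>P. G p t r \<tau>)"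
    by (simp only: sum.swap[of _ P] sum.swap[of _ _ "{1..H}"])
  also have "\<dots> = (\<Sum>\<tau>\<in>{1..H}. \<Sum>t\<in>T. \<Sum>r\<in>R. \<Sum>p\<in>{p\<in>P. rr p \<le> \<tau> \<and> (t, r) \<in> E p}. F p t r \<tau>)"
    using assms(1) by (simp add: sum.inter_filter G_def)
  finally show ?thesis .
qed

lemma sum_le_weighted_primal_coverage:
  assumes P: "primal_feasible I \<epsilon> H x y" and a: "\<And>p. p \<in> Pk I \<Longrightarrow> a p \<ge> 0"
    and "finite (Pk I)"
  shows "(\<Sum>p\<in>Pk I. a p)
      \<le> (\<Sum>p\<in>Pk I. \<Sum>e\<in>Ep I p. \<Sum>\<tau>\<in>{rl I p..H}. a p * x p e \<tau>) + (\<Sum>p\<in>PiL I. a p * y p)"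
proof -
  define X where "X p = (\<Sum>e\<in>Ep I p. \<Sum>\<tau>\<in>{rl I p..H}. x p e \<tau>)" for p
  have L: "PiL I \<subseteq> Pk I" unfolding PiL_def by blast
  have "a p \<le> a p * X p + (if p \<in> PiL I then a p * y p else 0)" if "p \<in> Pk I" for p
  proof -
    have "1 \<le> X p + (if p \<in> PiL I then y p else 0)"
      using P that unfolding primal_feasible_def X_def by auto
    from mult_left_mono[OF this a[OF that]] show ?thesis
      by (cases "p \<in> PiL I") (simp_all add: distrib_left)
  qed
  then have "(\<Sum>p\<in>Pk I. a p) \<le> (\<Sum>p\<in>Pk I. a p * X p + (if p \<in> PiL I then a p * y p else 0))"
    by (rule sum_mono)
  also have "\<dots> = (\<Sum>p\<in>Pk I. a p * X p) + (\<Sum>p\<in>PiL I. a p * y p)"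
    using L assms(3) by (simp add: sum.distrib sum.If_cases Int_absorb1)
  finally show ?thesis
    unfolding X_def by (simp add: sum_distrib_left)
qed

lemma transmitter_load_bound:
  assumes V: "valid_inst I" and P: "primal_feasible I \<epsilon> H x y"
    and b: "\<And>t \<tau>. t \<in> Trn I \<Longrightarrow> \<tau> \<in> {1..H} \<Longrightarrow> b t \<tau> \<ge> 0"
  shows "(\<Sum>p\<in>Pk I. \<Sum>e\<in>Ep I p. \<Sum>\<tau>\<in>{rl I p..H}. real (dE I e) * b (fst e) \<tau> * x p e \<tau>)
      \<le> 1 / (2 + \<epsilon>) * (\<Sum>t\<in>Trn I. \<Sum>\<tau>\<in>{1..H}. b t \<tau>)"
proof -
  have fin: "finite (Pk I)" "finite (Trn I)" "finite (Rcv I)" and "\<forall>p\<in>Pk I. rl I p \<ge> 1"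
    using V unfolding valid_inst_def by blast+
  then have "(\<Sum>p\<in>Pk I. \<Sum>e\<in>Ep I p. \<Sum>\<tau>\<in>{rl I p..H}. real (dE I e) * b (fst e) \<tau> * x p e \<tau>)
      = (\<Sum>\<tau>\<in>{1..H}. \<Sum>t\<in>Trn I. b t \<tau> * (\<Sum>r\<in>Rcv I. \<Sum>p\<in>{p\<in>Pk I. rl I p \<le> \<tau> \<and> (t, r) \<in> Ep I p}.
            real (dl I t r) * x p (t, r) \<tau>))"
    using sum_packet_edge_time_reorder[OF fin Ep_subset_Trn_Rcv[OF V],
        of "rl I" "\<lambda>p t r \<tau>. real (dl I t r) * b t \<tau> * x p (t, r) \<tau>" H]
    by (simp add: dE_def sum_distrib_left mult_ac)
  also have "\<dots> \<le> (\<Sum>\<tau>\<in>{1..H}. \<Sum>t\<in>Trn I. b t \<tau> * (1 / (2 + \<epsilon>)))"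
    using P b unfolding primal_feasible_def by (intro sum_mono mult_left_mono) auto
  also have "\<dots> = 1 / (2 + \<epsilon>) * (\<Sum>t\<in>Trn I. \<Sum>\<tau>\<in>{1..H}. b t \<tau>)"
    by (subst sum.swap) (simp add: sum_distrib_left sum_divide_distrib)
  finally show ?thesis .
qed

lemma receiver_load_bound:
  assumes V: "valid_inst I" and P: "primal_feasible I \<epsilon> H x y"
    and b: "\<And>r \<tau>. r \<in> Rcv I \<Longrightarrow> \<tau> \<in> {1..H} \<Longrightarrow> b r \<tau> \<ge> 0"
  shows "(\<Sum>p\<in>Pk I. \<Sum>e\<in>Ep I p. \<Sum>\<tau>\<in>{rl I p..H}. real (dE I e) * b (snd e) \<tau> * x p e \<tau>)
      \<le> 1 / (2 + \<epsilon>) * (\<Sum>r\<in>Rcv I. \<Sum>\<tau>\<in>{1..H}. b r \<tau>)"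
proof -
  have fin: "finite (Pk I)" "finite (Trn I)" "finite (Rcv I)" and "\<forall>p\<in>Pk I. rl I p \<ge> 1"
    using V unfolding valid_inst_def by blast+
  then have "(\<Sum>p\<in>Pk I. \<Sum>e\<in>Ep I p. \<Sum>\<tau>\<in>{rl I p..H}. real (dE I e) * b (snd e) \<tau> * x p e \<tau>)
      = (\<Sum>\<tau>\<in>{1..H}. \<Sum>r\<in>Rcv I. b r \<tau> * (\<Sum>t\<in>Trn I. \<Sum>p\<in>{p\<in>Pk I. rl I p \<le> \<tau> \<and> (t, r) \<in> Ep I p}.
            real (dl I t r) * x p (t, r) \<tau>))"
    using sum_packet_edge_time_reorder[OF fin Ep_subset_Trn_Rcv[OF V],
        of "rl I" "\<lambda>p t r \<tau>. real (dl I t r) * b r \<tau> * x p (t, r) \<tau>" H]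
    by (simp add: dE_def sum_distrib_left mult_ac sum.swap[of _ "Trn I"])
  also have "\<dots> \<le> (\<Sum>\<tau>\<in>{1..H}. \<Sum>r\<in>Rcv I. b r \<tau> * (1 / (2 + \<epsilon>)))"
    using P b unfolding primal_feasible_def by (intro sum_mono mult_left_mono) auto
  also have "\<dots> = 1 / (2 + \<epsilon>) * (\<Sum>r\<in>Rcv I. \<Sum>\<tau>\<in>{1..H}. b r \<tau>)"
    by (subst sum.swap) (simp add: sum_distrib_left sum_divide_distrib)
  finally show ?thesis .
qed

lemma weak_duality:
  assumes V: "valid_inst I" and D: "dual_feasible I H a bt br" and P: "primal_feasible I \<epsilon> H x y"
  shows "(\<Sum>p\<in>Pk I. a p) - 1 / (2 + \<epsilon>) * ((\<Sum>t\<in>Trn I. \<Sum>\<tau>\<in>{1..H}. bt t \<tau>) + (\<Sum>r\<in>Rcv I. \<Sum>\<tau>\<in>{1..H}. br r \<tau>))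
         \<le> primal_obj I H x y"
proof -
  let ?S = "\<lambda>f. \<Sum>p\<in>Pk I. \<Sum>e\<in>Ep I p. \<Sum>\<tau>\<in>{rl I p..H}. f p e \<tau>"
  let ?AX = "?S (\<lambda>p e \<tau>. a p * x p e \<tau>)"
  let ?LT = "?S (\<lambda>p e \<tau>. real (dE I e) * bt (fst e) \<tau> * x p e \<tau>)"
  let ?LR = "?S (\<lambda>p e \<tau>. real (dE I e) * br (snd e) \<tau> * x p e \<tau>)"
  have "?AX - ?LT - ?LR
      = ?S (\<lambda>p e \<tau>. (a p - real (dE I e) * (bt (fst e) \<tau> + br (snd e) \<tau>)) * x p e \<tau>)"
    by (simp add: sum_subtractf sum.distrib algebra_simps)
  also have "\<dots> \<le> ?S (\<lambda>p e \<tau>. wt I p * x p e \<tau> * (real \<tau> + real (Delta I e) - real (rl I p)))"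
  proof (intro sum_mono)
    fix p e \<tau> assume "p \<in> Pk I" "e \<in> Ep I p" "\<tau> \<in> {rl I p..H}"
    with D P have "a p - real (dE I e) * (bt (fst e) \<tau> + br (snd e) \<tau>)
        \<le> wt I p * (real \<tau> + real (Delta I e) - real (rl I p))" and "x p e \<tau> \<ge> 0"
      unfolding dual_feasible_def primal_feasible_def by blast+
    from mult_right_mono[OF this] show "(a p - real (dE I e) * (bt (fst e) \<tau> + br (snd e) \<tau>)) * x p e \<tau>
        \<le> wt I p * x p e \<tau> * (real \<tau> + real (Delta I e) - real (rl I p))"
      by (simp add: mult_ac)
  qed
  finally have edges: "?AX - ?LT - ?LR \<le> ?S (\<lambda>p e \<tau>. wt I p * x p e \<tau> * (real \<tau> + real (Delta I e) - real (rl I p)))" .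
  have links: "(\<Sum>p\<in>PiL I. a p * y p) \<le> (\<Sum>p\<in>PiL I. wt I p * real (ell I p) * y p)"
    using D P unfolding dual_feasible_def primal_feasible_def by (intro sum_mono mult_right_mono) auto
  have cover: "(\<Sum>p\<in>Pk I. a p) \<le> ?AX + (\<Sum>p\<in>PiL I. a p * y p)"
    using D finite_Pk[OF V] unfolding dual_feasible_def
    by (intro sum_le_weighted_primal_coverage[OF P]) auto
  have "?LT \<le> 1 / (2 + \<epsilon>) * (\<Sum>t\<in>Trn I. \<Sum>\<tau>\<in>{1..H}. bt t \<tau>)"
    using D unfolding dual_feasible_def by (intro transmitter_load_bound[OF V P]) auto
  moreover have "?LR \<le> 1 / (2 + \<epsilon>) * (\<Sum>r\<in>Rcv I. \<Sum>\<tau>\<in>{1..H}. br r \<tau>)"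
    using D unfolding dual_feasible_def by (intro receiver_load_bound[OF V P]) auto
  ultimately show ?thesis
    using edges links cover unfolding primal_obj_def by (simp add: distrib_left)
qed

section \<open>The greedy schedule\<close>

lemma greedy_aux_independent:
  assumes "\<forall>a\<in>M. \<forall>b\<in>M. a \<noteq> b \<longrightarrow> \<not> adj a b" and "\<And>a b. adj a b \<Longrightarrow> adj b a"
  shows "\<forall>a\<in>greedy_aux adj M L. \<forall>b\<in>greedy_aux adj M L. a \<noteq> b \<longrightarrow> \<not> adj a b"
  using assms(1)
proof (induction L arbitrary: M)
  case Nil
  then show ?case by simp
next
  case (Cons c cs)
  show ?case
  proof (cases "\<forall>c'\<in>M. \<not> adj c' c")
    case True
    then have "\<forall>a\<in>insert c M. \<forall>b\<in>insert c M. a \<noteq> b \<longrightarrow> \<not> adj a b"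
      using Cons.prems assms(2) by blast
    from Cons.IH[OF this] True show ?thesis by simp
  next
    case False
    then have "greedy_aux adj M (c # cs) = greedy_aux adj M cs" by auto
    with Cons.IH[OF Cons.prems] show ?thesis by simp
  qed
qed

lemma chunks_finite:
  assumes "valid_inst I" shows "finite (chunks I A)"
proof (rule finite_subset)
  show "chunks I A \<subseteq> (SIGMA p:Pk I. {..<dE I (edg A p)})"
    unfolding chunks_def by auto
  show "finite (SIGMA p:Pk I. {..<dE I (edg A p)})"
    using finite_Pk[OF assms] by blast
qed

lemma rl_le_tx: "alg_run I A \<Longrightarrow> c \<in> chunks I A \<Longrightarrow> rl I (fst c) \<le> tx A c"
  unfolding alg_run_def by blast

lemma rl_le_of_prec:
  assumes V: "valid_inst I" and "p \<in> Pk I" "q \<in> Pk I" "prec I q p"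
  shows "rl I q \<le> rl I p"
proof (rule ccontr)
  assume "\<not> rl I q \<le> rl I p"
  moreover have "rl I p < rl I q \<Longrightarrow> prec I p q" "prec I p q \<Longrightarrow> prec I p p" "\<not> prec I p p"
    using V assms(2-4) unfolding valid_inst_def by blast+
  ultimately show False by linarith
qed

lemma same_step_chunks_not_adjacent:
  assumes V: "valid_inst I" and R: "alg_run I A"
    and c: "c \<in> chunks I A" and c': "c' \<in> chunks I A" and same: "tx A c = tx A c'" and "c \<noteq> c'"
  shows "\<not> adjacent (cedge A c) (cedge A c')"
proof -
  define s where "s = tx A c"
  have "rl I (fst c) \<ge> 1" using rl_pos[OF V] c unfolding chunks_def by auto
  then have "s \<ge> 1" using rl_le_tx[OF R c] unfolding s_def by linarith
  then obtain L where L: "{c \<in> pending I A s. tx A c = s} =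
      greedy_aux (\<lambda>c' c. adjacent (cedge A c') (cedge A c)) {} L"
    using R unfolding alg_run_def by blast
  have "c \<in> {c \<in> pending I A s. tx A c = s}" "c' \<in> {c \<in> pending I A s. tx A c = s}"
    using c c' same rl_le_tx[OF R c] rl_le_tx[OF R c'] unfolding s_def pending_def by auto
  moreover have "\<forall>a\<in>greedy_aux (\<lambda>c' c. adjacent (cedge A c') (cedge A c)) {} L.
      \<forall>b\<in>greedy_aux (\<lambda>c' c. adjacent (cedge A c') (cedge A c)) {} L.
        a \<noteq> b \<longrightarrow> \<not> adjacent (cedge A a) (cedge A b)"
    by (rule greedy_aux_independent) (auto simp: adjacent_def)
  ultimately show ?thesis
    using L \<open>c \<noteq> c'\<close> by auto
qed

lemma card_port_transmissions_le_1:
  assumes V: "valid_inst I" and R: "alg_run I A"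
    and port: "\<And>e e'. \<pi> e = \<pi> e' \<Longrightarrow> adjacent e e'"
  shows "card {c \<in> chunks I A. tx A c = s \<and> \<pi> (cedge A c) = u} \<le> 1"
proof -
  have fin: "finite {c \<in> chunks I A. tx A c = s \<and> \<pi> (cedge A c) = u}"
    using chunks_finite[OF V] by simp
  have "a = b" if "a \<in> chunks I A" "b \<in> chunks I A" "tx A a = tx A b"
      "\<pi> (cedge A a) = \<pi> (cedge A b)" for a b
    using same_step_chunks_not_adjacent[OF V R that(1-3)] port[OF that(4)] by blast
  then show ?thesis
    unfolding One_nat_def card_le_Suc0_iff_eq[OF fin] by auto
qed

lemma cw_nonneg: "valid_inst I \<Longrightarrow> c \<in> chunks I A \<Longrightarrow> cw I A c \<ge> 0"
  unfolding chunks_def cw_def by (auto dest: wt_pos intro: less_imp_le)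

lemma betaT_nonneg: "valid_inst I \<Longrightarrow> betaT I A t \<tau> \<ge> 0"
  unfolding betaT_def by (rule sum_nonneg) (auto intro: cw_nonneg)

lemma betaR_nonneg: "valid_inst I \<Longrightarrow> betaR I A r \<tau> \<ge> 0"
  unfolding betaR_def by (rule sum_nonneg) (auto intro: cw_nonneg)

lemma inactive_adjacent_chunk_tx:
  assumes V: "valid_inst I" and p: "p \<in> Pk I" and "rl I p \<le> \<tau>"
    and c: "c \<in> AdjS I A p e" and "\<not> active I A c \<tau>"
  shows "tx A c \<in> {rl I p..<\<tau>}"
proof -
  have "c \<in> chunks I A" "prec I (fst c) p" "rl I p \<le> tx A c"
    using c unfolding AdjS_def Bset_def by auto
  moreover have "fst c \<in> Pk I"
    using \<open>c \<in> chunks I A\<close> unfolding chunks_def by auto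
  ultimately have "rl I (fst c) \<le> \<tau>"
    using rl_le_of_prec[OF V p] \<open>rl I p \<le> \<tau>\<close> by (meson order_trans)
  with assms(5) have "fin_time I A c \<le> \<tau>"
    unfolding active_def by auto
  with \<open>rl I p \<le> tx A c\<close> show ?thesis
    unfolding fin_time_def by auto
qed

lemma card_inactive_adjacent_chunks:
  assumes V: "valid_inst I" and R: "alg_run I A" and p: "p \<in> Pk I" and "rl I p \<le> \<tau>"
  shows "card {c \<in> AdjS I A p e. \<not> active I A c \<tau>} \<le> 2 * (\<tau> - rl I p)"
proof -
  define Sent where "Sent s = {c \<in> chunks I A. tx A c = s \<and> fst (cedge A c) = fst e}
      \<union> {c \<in> chunks I A. tx A c = s \<and> snd (cedge A c) = snd e}" for s
  have "{c \<in> AdjS I A p e. \<not> active I A c \<tau>} \<subseteq> (\<Union>s\<in>{rl I p..<\<tau>}. Sent s)"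
  proof
    fix c assume "c \<in> {c \<in> AdjS I A p e. \<not> active I A c \<tau>}"
    then have "c \<in> AdjS I A p e" "tx A c \<in> {rl I p..<\<tau>}"
      using inactive_adjacent_chunk_tx[OF V p \<open>rl I p \<le> \<tau>\<close>, of c] by blast+
    moreover from this(1) have "c \<in> Sent (tx A c)"
      unfolding AdjS_def Bset_def Sent_def adjacent_def by blast
    ultimately show "c \<in> (\<Union>s\<in>{rl I p..<\<tau>}. Sent s)" by blast
  qed
  moreover have "finite (\<Union>s\<in>{rl I p..<\<tau>}. Sent s)"
    using chunks_finite[OF V] unfolding Sent_def by auto
  ultimately have "card {c \<in> AdjS I A p e. \<not> active I A c \<tau>} \<le> card (\<Union>s\<in>{rl I p..<\<tau>}. Sent s)"
    by (rule card_mono[rotated])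
  also have "\<dots> \<le> (\<Sum>s\<in>{rl I p..<\<tau>}. card (Sent s))"
    by (rule card_UN_le) simp
  also have "\<dots> \<le> (\<Sum>s\<in>{rl I p..<\<tau>}. 2)"
  proof (rule sum_mono)
    fix s
    have "card {c \<in> chunks I A. tx A c = s \<and> fst (cedge A c) = fst e} \<le> 1"
      by (rule card_port_transmissions_le_1[OF V R]) (simp add: adjacent_def)
    moreover have "card {c \<in> chunks I A. tx A c = s \<and> snd (cedge A c) = snd e} \<le> 1"
      by (rule card_port_transmissions_le_1[OF V R]) (simp add: adjacent_def)
    moreover have "card (Sent s) \<le> card {c \<in> chunks I A. tx A c = s \<and> fst (cedge A c) = fst e}
        + card {c \<in> chunks I A. tx A c = s \<and> snd (cedge A c) = snd e}"
      unfolding Sent_def by (rule card_Un_le)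
    ultimately show "card (Sent s) \<le> 2" by linarith
  qed
  finally show ?thesis by simp
qed

lemma active_adjacent_weight_le:
  assumes V: "valid_inst I"
  shows "(\<Sum>c\<in>{c \<in> AdjS I A p e. active I A c \<tau>}. cw I A c) \<le> betaT I A (fst e) \<tau> + betaR I A (snd e) \<tau>"
proof -
  define AT where "AT = {c \<in> chunks I A. active I A c \<tau> \<and> fst (cedge A c) = fst e}"
  define AR where "AR = {c \<in> chunks I A. active I A c \<tau> \<and> snd (cedge A c) = snd e}"
  have fin: "finite AT" "finite AR"
    using chunks_finite[OF V] unfolding AT_def AR_def by auto
  have nonneg: "cw I A c \<ge> 0" if "c \<in> AT \<union> AR" for c
    using cw_nonneg[OF V, of c A] that unfolding AT_def AR_def by blast
  have "(\<Sum>c\<in>{c \<in> AdjS I A p e. active I A c \<tau>}. cw I A c) \<le> (\<Sum>c\<in>AT \<union> AR. cw I A c)"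
    using fin nonneg
    by (intro sum_mono2) (auto simp: AdjS_def Bset_def adjacent_def AT_def AR_def)
  also have "\<dots> \<le> (\<Sum>c\<in>AT. cw I A c) + (\<Sum>c\<in>AR. cw I A c)"
    using sum.union_inter[OF fin, of "cw I A"] sum_nonneg[of "AT \<inter> AR" "cw I A"] nonneg by auto
  finally show ?thesis
    unfolding AT_def AR_def betaT_def betaR_def .
qed

section \<open>Dual feasibility\<close>

lemma imp_queue_term_le_split:
  assumes V: "valid_inst I" and p: "p \<in> Pk I" and e: "e \<in> Ep I p"
  shows "wt I p * real (card (HS I A p e)) + real (dE I e) * (\<Sum>c\<in>LS I A p e. cw I A c)
     \<le> wt I p * real (card {c \<in> AdjS I A p e. \<not> Q c})
       + real (dE I e) * (\<Sum>c\<in>{c \<in> AdjS I A p e. Q c}. cw I A c)"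
proof -
  define w where "w = wt I p"
  define d where "d = real (dE I e)"
  define X where "X = AdjS I A p e"
  define charge where "charge c = (if c \<in> HS I A p e then w else d * cw I A c)" for c
  have "d \<ge> 1" using dE_ge_1[OF V e] unfolding d_def by simp
  have finX: "finite X"
    using chunks_finite[OF V] unfolding X_def AdjS_def Bset_def by (rule rev_finite_subset) auto
  have HX: "HS I A p e \<subseteq> X" unfolding HS_def X_def by auto
  have charge_le_w: "charge c \<le> w" if "c \<in> X" for c
  proof (cases "c \<in> HS I A p e")
    case False
    with that have "cw I A c < w / d" unfolding HS_def X_def w_def d_def by auto
    with \<open>d \<ge> 1\<close> False show ?thesis unfolding charge_def by (simp add: field_simps)
  qed (simp add: charge_def)
  have charge_le_cw: "charge c \<le> d * cw I A c" for c
  proof (cases "c \<in> HS I A p e")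
    case True
    then have "w / d \<le> cw I A c" unfolding HS_def w_def d_def by auto
    with \<open>d \<ge> 1\<close> True show ?thesis unfolding charge_def by (simp add: field_simps)
  qed (simp add: charge_def)
  have "(\<Sum>c\<in>HS I A p e. charge c) = w * real (card (HS I A p e))"
    by (simp add: charge_def)
  moreover have "(\<Sum>c\<in>X - HS I A p e. charge c) = d * (\<Sum>c\<in>LS I A p e. cw I A c)"
    unfolding LS_def X_def charge_def by (simp add: sum_distrib_left)
  ultimately have "w * real (card (HS I A p e)) + d * (\<Sum>c\<in>LS I A p e. cw I A c) = (\<Sum>c\<in>X. charge c)"
    using sum.subset_diff[OF HX finX, of charge] by (simp add: add.commute)
  also have "\<dots> = (\<Sum>c\<in>{c \<in> X. \<not> Q c}. charge c) + (\<Sum>c\<in>{c \<in> X. Q c}. charge c)"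
    using sum.Int_Diff[OF finX, of charge "{c. Q c}"] by (simp add: Int_def set_diff_eq add.commute)
  also have "\<dots> \<le> (\<Sum>c\<in>{c \<in> X. \<not> Q c}. w) + (\<Sum>c\<in>{c \<in> X. Q c}. d * cw I A c)"
    using charge_le_w charge_le_cw by (intro add_mono sum_mono) auto
  finally show ?thesis
    unfolding w_def d_def X_def by (simp add: sum_distrib_left mult.commute)
qed

lemma imp_queue_term_le:
  assumes V: "valid_inst I" and R: "alg_run I A"
    and p: "p \<in> Pk I" and e: "e \<in> Ep I p" and \<tau>: "rl I p \<le> \<tau>"
  shows "wt I p * real (card (HS I A p e)) + real (dE I e) * (\<Sum>c\<in>LS I A p e. cw I A c)
     \<le> 2 * wt I p * (real \<tau> - real (rl I p)) + real (dE I e) * (betaT I A (fst e) \<tau> + betaR I A (snd e) \<tau>)"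
proof -
  have "real (card {c \<in> AdjS I A p e. \<not> active I A c \<tau>}) \<le> real (2 * (\<tau> - rl I p))"
    using card_inactive_adjacent_chunks[OF V R p \<tau>, of e] unfolding of_nat_le_iff .
  also have "\<dots> = 2 * (real \<tau> - real (rl I p))"
    using \<tau> by (simp add: of_nat_diff)
  finally have "wt I p * real (card {c \<in> AdjS I A p e. \<not> active I A c \<tau>})
      \<le> wt I p * (2 * (real \<tau> - real (rl I p)))"
    using wt_pos[OF V p] by simp
  moreover have "real (dE I e) * (\<Sum>c\<in>{c \<in> AdjS I A p e. active I A c \<tau>}. cw I A c)
      \<le> real (dE I e) * (betaT I A (fst e) \<tau> + betaR I A (snd e) \<tau>)"
    by (intro mult_left_mono active_adjacent_weight_le[OF V]) simp
  ultimately show ?thesis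
    using imp_queue_term_le_split[OF V p e, of A "\<lambda>c. active I A c \<tau>"] by (simp add: algebra_simps)
qed

lemma alg_run_imp_min:
  "alg_run I A \<Longrightarrow> p \<in> Pk I \<Longrightarrow> e \<in> Ep I p \<Longrightarrow> imp I A p (edg A p) \<le> imp I A p e"
  unfolding alg_run_def by blast

lemma alg_run_fixd_iff:
  "alg_run I A \<Longrightarrow> p \<in> Pk I \<Longrightarrow>
    fixd A p \<longleftrightarrow> p \<in> PiL I \<and> wt I p * real (ell I p) \<le> imp I A p (edg A p)"
  unfolding alg_run_def by blast

lemma alpha_le_imp:
  assumes "alg_run I A" and "p \<in> Pk I" and "e \<in> Ep I p"
  shows "alpha I A p \<le> imp I A p e"
proof -
  have "alpha I A p \<le> imp I A p (edg A p)"
    using alg_run_fixd_iff[OF assms(1,2)] unfolding alpha_def by auto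
  also have "\<dots> \<le> imp I A p e"
    by (rule alg_run_imp_min[OF assms])
  finally show ?thesis .
qed

lemma alpha_le_fixed_link_cost:
  assumes "alg_run I A" and "p \<in> PiL I"
  shows "alpha I A p \<le> wt I p * real (ell I p)"
proof -
  have "p \<in> Pk I" using assms(2) unfolding PiL_def by blast
  then show ?thesis
    using alg_run_fixd_iff[OF assms(1)] assms(2) unfolding alpha_def by auto
qed

lemma alpha_nonneg:
  assumes V: "valid_inst I" and p: "p \<in> Pk I"
  shows "alpha I A p \<ge> 0"
proof -
  have "(\<Sum>c\<in>LS I A p e. cw I A c) \<ge> 0" for e
    by (rule sum_nonneg) (auto simp: LS_def AdjS_def Bset_def intro: cw_nonneg[OF V])
  then have "imp I A p e \<ge> 0" for e
    using wt_pos[OF V p] unfolding imp_def by (intro add_nonneg_nonneg mult_nonneg_nonneg) auto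
  then show ?thesis
    using wt_pos[OF V p] unfolding alpha_def by auto
qed

lemma alpha_dual_constraint:
  assumes V: "valid_inst I" and R: "alg_run I A"
    and p: "p \<in> Pk I" and e: "e \<in> Ep I p" and \<tau>: "rl I p \<le> \<tau>"
  shows "alpha I A p \<le> 2 * (wt I p * (real \<tau> + real (Delta I e) - real (rl I p)))
     + real (dE I e) * (betaT I A (fst e) \<tau> + betaR I A (snd e) \<tau>)"
proof -
  let ?head = "real (dl I (sp I p) (fst e)) + (real (dE I e) + 1) / 2 + real (dl I (snd e) (dp I p))"
  have "?head \<le> real (Delta I e)"
    using dE_ge_1[OF V e] e unfolding Ep_def Delta_def dE_def by auto
  then have "wt I p * ?head \<le> wt I p * real (Delta I e)"
    using wt_pos[OF V p] by simp
  moreover have "wt I p * real (Delta I e) \<ge> 0"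
    using wt_pos[OF V p] by simp
  moreover have "alpha I A p \<le> wt I p * ?head + (wt I p * real (card (HS I A p e))
      + real (dE I e) * (\<Sum>c\<in>LS I A p e. cw I A c))"
    using alpha_le_imp[OF R p e] unfolding imp_def by simp
  ultimately show ?thesis
    using imp_queue_term_le[OF V R p e \<tau>] \<tau> by (simp add: algebra_simps)
qed

lemma half_dual_feasible:
  assumes V: "valid_inst I" and R: "alg_run I A"
  shows "dual_feasible I H (\<lambda>p. alpha I A p / 2) (\<lambda>t \<tau>. betaT I A t \<tau> / 2) (\<lambda>r \<tau>. betaR I A r \<tau> / 2)"
  unfolding dual_feasible_def
proof (intro conjI ballI)
  fix p assume "p \<in> PiL I"
  moreover from this have "p \<in> Pk I" unfolding PiL_def by blast
  ultimately show "alpha I A p / 2 \<le> wt I p * real (ell I p)"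
    using alpha_le_fixed_link_cost[OF R, of p] alpha_nonneg[OF V, of p A] by linarith
next
  fix p e \<tau> assume "p \<in> Pk I" "e \<in> Ep I p" "\<tau> \<in> {rl I p..H}"
  then have "alpha I A p \<le> 2 * (wt I p * (real \<tau> + real (Delta I e) - real (rl I p)))
      + real (dE I e) * (betaT I A (fst e) \<tau> + betaR I A (snd e) \<tau>)"
    by (intro alpha_dual_constraint[OF V R]) auto
  then show "alpha I A p / 2 - real (dE I e) * (betaT I A (fst e) \<tau> / 2 + betaR I A (snd e) \<tau> / 2)
      \<le> wt I p * (real \<tau> + real (Delta I e) - real (rl I p))"
    by (simp add: field_simps)
qed (use alpha_nonneg[OF V] betaT_nonneg[OF V] betaR_nonneg[OF V] in auto)

section \<open>Truncating the dual objective\<close>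

lemma sum_le_infsum_of_eventually_zero:
  fixes f :: "nat \<Rightarrow> real"
  assumes "\<And>n. f n \<ge> 0" and "\<And>n. n > K \<Longrightarrow> f n = 0"
  shows "(\<Sum>n\<in>{1..H}. f n) \<le> (\<Sum>\<^sub>\<infinity>n\<in>{1..}. f n)"
proof -
  have "(\<Sum>\<^sub>\<infinity>n\<in>{1..}. f n) = (\<Sum>\<^sub>\<infinity>n\<in>{1..max H K}. f n)"
    using assms(2) by (intro infsum_cong_neutral) auto
  also have "\<dots> = (\<Sum>n\<in>{1..max H K}. f n)"
    by simp
  also have "(\<Sum>n\<in>{1..H}. f n) \<le> \<dots>"
    using assms(1) by (intro sum_mono2) auto
  finally show ?thesis .
qed

lemma chunks_eventually_inactive:
  assumes "valid_inst I"
  obtains K where "\<And>c \<tau>. c \<in> chunks I A \<Longrightarrow> K < \<tau> \<Longrightarrow> \<not> active I A c \<tau>"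
proof
  fix c \<tau> assume "c \<in> chunks I A" "(\<Sum>c\<in>chunks I A. fin_time I A c) < \<tau>"
  moreover have "fin_time I A c \<le> (\<Sum>c\<in>chunks I A. fin_time I A c)"
    using chunks_finite[OF assms] \<open>c \<in> chunks I A\<close> by (intro member_le_sum) auto
  ultimately show "\<not> active I A c \<tau>"
    unfolding active_def by linarith
qed

lemma Deps_le_truncated_dual_objective:
  assumes V: "valid_inst I" and "\<epsilon> > 0"
  shows "Deps I A \<epsilon> \<le> (\<Sum>p\<in>Pk I. alpha I A p)
     - 1 / (2 + \<epsilon>) * ((\<Sum>t\<in>Trn I. \<Sum>\<tau>\<in>{1..H}. betaT I A t \<tau>) + (\<Sum>r\<in>Rcv I. \<Sum>\<tau>\<in>{1..H}. betaR I A r \<tau>))"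
proof -
  obtain K where K: "\<And>c \<tau>. c \<in> chunks I A \<Longrightarrow> K < \<tau> \<Longrightarrow> \<not> active I A c \<tau>"
    using chunks_eventually_inactive[OF V] by blast
  have "betaT I A t \<tau> = 0" and "betaR I A r \<tau> = 0" if "K < \<tau>" for t r \<tau>
  proof -
    have "{c \<in> chunks I A. active I A c \<tau> \<and> P c} = {}" for P
      using K[OF _ that] by blast
    then show "betaT I A t \<tau> = 0" "betaR I A r \<tau> = 0"
      unfolding betaT_def betaR_def by (simp_all only: sum.empty)
  qed
  then have "(\<Sum>\<tau>\<in>{1..H}. betaT I A t \<tau>) \<le> (\<Sum>\<^sub>\<infinity>\<tau>\<in>{1..}. betaT I A t \<tau>)"
    and "(\<Sum>\<tau>\<in>{1..H}. betaR I A r \<tau>) \<le> (\<Sum>\<^sub>\<infinity>\<tau>\<in>{1..}. betaR I A r \<tau>)" for t r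
    by (intro sum_le_infsum_of_eventually_zero[of _ K] betaT_nonneg[OF V] betaR_nonneg[OF V]; simp)+
  then have "(\<Sum>t\<in>Trn I. \<Sum>\<tau>\<in>{1..H}. betaT I A t \<tau>) + (\<Sum>r\<in>Rcv I. \<Sum>\<tau>\<in>{1..H}. betaR I A r \<tau>)
      \<le> (\<Sum>t\<in>Trn I. \<Sum>\<^sub>\<infinity>\<tau>\<in>{1..}. betaT I A t \<tau>) + (\<Sum>r\<in>Rcv I. \<Sum>\<^sub>\<infinity>\<tau>\<in>{1..}. betaR I A r \<tau>)"
    by (intro add_mono sum_mono)
  with \<open>\<epsilon> > 0\<close> show ?thesis
    unfolding Deps_def by (simp add: divide_right_mono)
qed

lemma half_Deps_le_primal_obj:
  assumes V: "valid_inst I" and R: "alg_run I A" and "\<epsilon> > 0" and P: "primal_feasible I \<epsilon> H x y"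
  shows "Deps I A \<epsilon> / 2 \<le> primal_obj I H x y"
proof -
  define c where "c = 1 / (2 + \<epsilon>)"
  define BT where "BT = (\<Sum>t\<in>Trn I. \<Sum>\<tau>\<in>{1..H}. betaT I A t \<tau>)"
  define BR where "BR = (\<Sum>r\<in>Rcv I. \<Sum>\<tau>\<in>{1..H}. betaR I A r \<tau>)"
  have "(\<Sum>p\<in>Pk I. alpha I A p) / 2 - c * (BT / 2 + BR / 2) \<le> primal_obj I H x y"
    using weak_duality[OF V half_dual_feasible[OF V R] P]
    unfolding c_def BT_def BR_def by (simp only: sum_divide_distrib)
  moreover have "Deps I A \<epsilon> \<le> (\<Sum>p\<in>Pk I. alpha I A p) - c * (BT + BR)"
    using Deps_le_truncated_dual_objective[OF V \<open>\<epsilon> > 0\<close>] unfolding c_def BT_def BR_def .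
  ultimately show ?thesis
    by (simp add: field_simps)
qed

theorem mainTheorem6:
  fixes I :: "('v, 'p) inst" and A :: "('v, 'p) run" and \<epsilon> :: real and H :: nat
  assumes "valid_inst I"
    and "alg_run I A"
    and "\<epsilon> > 0"
    and "\<forall>p\<in>Pk I. rl I p \<le> H"
  shows "dual_feasible I H (\<lambda>p. alpha I A p / 2) (\<lambda>t \<tau>. betaT I A t \<tau> / 2) (\<lambda>r \<tau>. betaR I A r \<tau> / 2)
       \<and> ereal (Deps I A \<epsilon>) \<le> 2 * primal_val I \<epsilon> H"
proof
  show "dual_feasible I H (\<lambda>p. alpha I A p / 2) (\<lambda>t \<tau>. betaT I A t \<tau> / 2) (\<lambda>r \<tau>. betaR I A r \<tau> / 2)"
    using half_dual_feasible[OF assms(1,2)] .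
  have "ereal (Deps I A \<epsilon> / 2) \<le> primal_val I \<epsilon> H"
    unfolding primal_val_def using half_Deps_le_primal_obj[OF assms(1-3)]
    by (auto intro!: Inf_greatest)
  from ereal_mult_left_mono[OF this, of 2] show "ereal (Deps I A \<epsilon>) \<le> 2 * primal_val I \<epsilon> H"
    by simp
qed

end
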